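(* Let $f \in L^\infty([-\pi,\pi])$ have real Fourier coefficients, and suppose there is $\delta>0$ with $\delta \le |f(\theta)|$ for all $\theta\in[-\pi,\pi]$. Let $\widetilde f := f/|f|$. For each $n$: <ul> <li>let $A_n(f)$, $A_n(\widetilde f)$ and $A_M := A_n(|f|)$ be the $n\times n$ Toeplitz matrices generated by $f$, $\widetilde f$ and $|f|$ respectively;</li> <li>let $Y_n$ be the $n\times n$ exchange matrix;</li> <li>define $E_n$ by \[A_M^{-1} Y_n A_n(f) = Y_n A_n(\widetilde f) + E_n.\]</li> </ul> Then $\|E_n\|_2 = o(n)$ as $n\to\infty$. Moreover, for every $n$ all eigenvalues of the symmetric matrix $Y_n A_n(\widetilde f)$ lie in $[-1,1]$.
   Context: For $g\in L^1([-\pi,\pi])$, $A_n(g)$ denotes the $n\times n$ Toeplitz matrix whose $(i,j)$ entry is $\frac{1}{2\pi}\int_{-\pi}^{\pi} g(\theta)e^{-\mathrm{i}(i-j)\theta}\,d\theta$. The exchange matrix $Y_n$ has $(Y_n)_{ij}=1$ if $i+j=n+1$ and $0$ otherwise. $\|\cdot\|_2$ is the spectral norm. *)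

theory Defs
  imports "HOL-Analysis.Analysis" "HOL-Library.Landau_Symbols"
    "Jordan_Normal_Form.Matrix" "Jordan_Normal_Form.Char_Poly"
    "Jordan_Normal_Form.Gauss_Jordan_Elimination"
begin

definition fourier_coeff :: "(real \<Rightarrow> complex) \<Rightarrow> int \<Rightarrow> complex" where
  "fourier_coeff g k =
     complex_of_real (1 / (2 * pi)) *
     (LINT t:{-pi..pi}|lborel. g t * exp (- (\<i> * of_int k * complex_of_real t)))"

definition toeplitz :: "nat \<Rightarrow> (real \<Rightarrow> complex) \<Rightarrow> complex mat" where
  "toeplitz n g = mat n n (\<lambda>(i, j). fourier_coeff g (int i - int j))"

definition exchange :: "nat \<Rightarrow> complex mat" where
  "exchange n = mat n n (\<lambda>(i, j). if i + j + 1 = n then 1 else 0)"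

definition vnorm :: "complex vec \<Rightarrow> real" where
  "vnorm x = sqrt (\<Sum>i<dim_vec x. (cmod (x $ i))\<^sup>2)"

definition spec_norm :: "complex mat \<Rightarrow> real" where
  "spec_norm A = Sup {vnorm (A *\<^sub>v x) | x. x \<in> carrier_vec (dim_col A) \<and> vnorm x \<le> 1}"

end

(*
  For x in C^n let P_x(t) = sum_j x_j e^(ijt). Then y^* A_n(g) x = (1/2pi) int g P_x conj(P_y)
  over [-pi, pi], and for g = 1 this is Parseval's identity |x|^2 = (1/2pi) int |P_x|^2.
  Hence ||A_n(g)||_2 <= ||g||_oo, and x^* A_n(|f|) x >= delta |x|^2, so A_n(|f|) is invertible
  with ||A_n(|f|)^(-1)||_2 <= 1/delta.  As Y_n is unitary, ||E_n||_2 <= ||f||_oo/delta + 1 for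
  every n, which is much stronger than o(n).

  The Fourier coefficients of g are real iff g(-t) = conj(g(t)) almost everywhere.  The nontrivial
  direction is the uniqueness theorem for Fourier coefficients, proved by approximating indicators
  of intervals boundedly by trigonometric polynomials in cos(t - s) (Bernstein polynomials).  The
  symmetry passes from f to f/|f|, so the entries c_(n-1-i-j) of Y_n A_n(f/|f|) are real and
  symmetric in i, j: the matrix is Hermitian of norm at most 1, hence its eigenvalues are real and
  lie in [-1, 1].
*)
theory Submission
  imports Defs "HOL-Real_Asymp.Real_Asymp"
begin

no_notation Finite_Cartesian_Product.vec_nth (infixl "$" 90)

section \<open>Uniqueness of Fourier coefficients\<close>

lemma set_integrable_mult_continuous:
  fixes g h :: "real \<Rightarrow> 'a::{real_normed_field, banach, second_countable_topology}"
  assumes g: "set_integrable lborel {a..b} g" and h: "continuous_on {a..b} h"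
  shows "set_integrable lborel {a..b} (\<lambda>t. g t * h t)"
proof -
  obtain C where C: "\<And>t. t \<in> {a..b} \<Longrightarrow> norm (h t) \<le> C"
    using compact_imp_bounded[OF compact_continuous_image[OF h compact_Icc]]
    unfolding bounded_iff by blast
  have "set_borel_measurable lborel {a..b} g"
    using g unfolding set_integrable_def set_borel_measurable_def by simp
  moreover have "set_borel_measurable lborel {a..b} h"
    using set_measurable_continuous_on[OF _ h] by (simp add: set_borel_measurable_def)
  ultimately have "set_borel_measurable lborel {a..b} (\<lambda>t. g t * h t)"
    unfolding set_borel_measurable_def
    by (rule borel_measurable_times[THEN measurable_cong[THEN iffD1, rotated]])
       (auto simp: indicator_def)
  moreover have "AE t in lborel. t \<in> {a..b} \<longrightarrow> norm (g t * h t) \<le> norm (of_real C * g t)"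
  proof (intro AE_I2 impI)
    fix t assume "t \<in> {a..b}"
    then have "norm (g t) * norm (h t) \<le> norm (g t) * \<bar>C\<bar>"
      using C[of t] by (intro mult_left_mono) auto
    then show "norm (g t * h t) \<le> norm (of_real C * g t)"
      by (simp add: norm_mult mult.commute)
  qed
  ultimately show ?thesis
    by (rule set_integrable_bound[rotated]) (use g in simp)
qed

lemma set_integrable_sum:
  fixes f :: "'i \<Rightarrow> 'a \<Rightarrow> 'b::{banach, second_countable_topology}"
  assumes "\<And>i. i \<in> I \<Longrightarrow> set_integrable M A (f i)"
  shows "set_integrable M A (\<lambda>t. \<Sum>i\<in>I. f i t)"
  using assms unfolding set_integrable_def by (simp add: scaleR_sum_right)

lemma set_integral_sum:
  fixes f :: "'i \<Rightarrow> 'a \<Rightarrow> 'b::{banach, second_countable_topology}"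
  assumes "\<And>i. i \<in> I \<Longrightarrow> set_integrable M A (f i)"
  shows "(LINT t:A|M. (\<Sum>i\<in>I. f i t)) = (\<Sum>i\<in>I. LINT t:A|M. f i t)"
  using assms unfolding set_lebesgue_integral_def set_integrable_def
  by (simp add: scaleR_sum_right)

lemma integral_eq_0_if_interval_integrals_eq_0:
  fixes u :: "real \<Rightarrow> 'a::{banach, second_countable_topology}"
  assumes u: "integrable lborel u" and intervals: "\<And>a b. (LBINT t:{a<..<b}. u t) = 0"
  shows "(\<integral>t. u t \<partial>lborel) = 0"
proof -
  have "x \<in> (\<Union>m. {- real m<..<real m})" for x :: real
  proof -
    obtain m where "\<bar>x\<bar> < real m"
      using reals_Archimedean2 by blast
    then show ?thesis
      by (intro UN_I[of m]) auto
  qed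
  then have UN: "(\<Union>m. {- real m<..<real m}) = UNIV"
    by blast
  have "(\<lambda>m. LBINT t:{- real m<..<real m}. u t) \<longlonglongrightarrow> (LBINT t:(\<Union>m. {- real m<..<real m}). u t)"
    using u by (intro set_integral_cont_up) (auto simp: incseq_def set_integrable_def UN)
  then show ?thesis
    using intervals UN by (simp add: LIMSEQ_const_iff set_lebesgue_integral_def)
qed

lemma AE_eq_0_if_interval_integrals_eq_0:
  fixes u :: "real \<Rightarrow> 'a::{banach, second_countable_topology}"
  assumes u: "integrable lborel u" and intervals: "\<And>a b. (LBINT t:{a<..<b}. u t) = 0"
  shows "AE t in lborel. u t = 0"
proof (rule sigma_finite_measure.density_zero[OF sigma_finite_lborel u])
  let ?G = "range (\<lambda>(a, b). {a<..<b} :: real set)"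
  have sets_eq: "sets (lborel :: real measure) = sigma_sets UNIV ?G"
    by (simp add: borel_eq_box)
  have Int_stable: "Int_stable ?G"
  proof (rule Int_stableI)
    fix X Y assume "X \<in> ?G" "Y \<in> ?G"
    then obtain a b c d where "X = {a<..<b}" "Y = {c<..<d}" by auto
    then have "X \<inter> Y = {max a c<..<min b d}" by auto
    then show "X \<inter> Y \<in> ?G" by auto
  qed
  have whole: "(\<integral>t. u t \<partial>lborel) = 0"
    using u intervals by (rule integral_eq_0_if_interval_integrals_eq_0)
  fix A :: "real set" assume "A \<in> sets lborel"
  then have A_sigma: "A \<in> sigma_sets UNIV ?G"
    using sets_eq by simp
  have G_Pow: "?G \<subseteq> Pow UNIV"
    by simp
  from Int_stable G_Pow A_sigma show "(LBINT t:A. u t) = 0"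
  proof (induct rule: sigma_sets_induct_disjoint)
    case (basic A)
    then show ?case using intervals by auto
  next
    case empty
    then show ?case by (simp add: set_lebesgue_integral_def)
  next
    case (compl A)
    then have "A \<in> sets lborel"
      using sets_eq by simp
    then have "integrable lborel (\<lambda>t. indicator A t *\<^sub>R u t)"
      using u by (rule integrable_mult_indicator)
    moreover have "(\<lambda>t. indicator (UNIV - A) t *\<^sub>R u t) = (\<lambda>t. u t - indicator A t *\<^sub>R u t)"
      by (auto simp: fun_eq_iff split: split_indicator)
    ultimately have "(LBINT t:(UNIV - A). u t) = (\<integral>t. u t \<partial>lborel) - (LBINT t:A. u t)"
      using u unfolding set_lebesgue_integral_def by simp
    then show ?case
      using compl whole by simp
  next
    case (union A)
    then have "\<And>i. A i \<in> sets lborel"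
      using sets_eq by auto
    moreover from this have "(\<Union>i. A i) \<in> sets lborel"
      by (intro sets.countable_UN) auto
    ultimately have "(LBINT t:(\<Union>i. A i). u t) = (\<Sum>i. LBINT t:A i. u t)"
      using union(1) u
      by (intro lebesgue_integral_countable_add)
         (auto simp: disjoint_family_on_def set_integrable_def intro: integrable_mult_indicator)
    then show ?case
      using union by simp
  qed
qed

lemma cos_less_cos_iff_abs_less:
  fixes b d :: real
  assumes "0 < b" "b \<le> pi" "b - 2 * pi \<le> d" "d \<le> 2 * pi - b"
  shows "cos b < cos d \<longleftrightarrow> \<bar>d\<bar> < b"
proof -
  define e where "e = \<bar>d\<bar>"
  have cos_e: "cos d = cos e"
    unfolding e_def by (cases "0 \<le> d") (simp_all only: abs_of_nonneg abs_of_neg not_le cos_minus)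
  have e: "0 \<le> e" "e \<le> 2 * pi - b"
    unfolding e_def using assms(3,4) by linarith+
  show ?thesis
  proof
    assume "\<bar>d\<bar> < b"
    then show "cos b < cos d"
      using cos_monotone_0_pi[of e b] assms(2) e cos_e unfolding e_def by linarith
  next
    assume less: "cos b < cos d"
    show "\<bar>d\<bar> < b"
    proof (rule ccontr)
      assume "\<not> \<bar>d\<bar> < b"
      then have "b \<le> e"
        unfolding e_def by simp
      have "cos e \<le> cos b"
      proof (cases "e \<le> pi")
        case True
        then show ?thesis
          using cos_monotone_0_pi_le[of b e] assms(1) \<open>b \<le> e\<close> by linarith
      next
        case False
        then have "cos (2 * pi - e) \<le> cos b"
          using cos_monotone_0_pi_le[of b "2 * pi - e"] assms(1) e by linarith
        then show ?thesis
          by (simp only: cos_2pi_minus)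
      qed
      then show False
        using less cos_e by linarith
    qed
  qed
qed

inductive trig_poly :: "(real \<Rightarrow> complex) \<Rightarrow> bool" where
  const: "trig_poly (\<lambda>_. c)"
| add: "trig_poly g \<Longrightarrow> trig_poly h \<Longrightarrow> trig_poly (\<lambda>t. g t + h t)"
| mult_cis: "trig_poly h \<Longrightarrow> trig_poly (\<lambda>t. h t * cis (of_int k * t))"

lemma trig_poly_scale: "trig_poly h \<Longrightarrow> trig_poly (\<lambda>t. c * h t)"
proof (induction rule: trig_poly.induct)
  case (const d)
  show ?case by (rule trig_poly.const)
next
  case (add g h)
  show ?case using trig_poly.add[OF add.IH] by (simp add: distrib_left)
next
  case (mult_cis h k)
  show ?case using trig_poly.mult_cis[OF mult_cis.IH, of k] by (simp add: mult.assoc)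
qed

lemma trig_poly_mult:
  assumes g: "trig_poly g" and h: "trig_poly h"
  shows "trig_poly (\<lambda>t. g t * h t)"
  using h
proof (induction rule: trig_poly.induct)
  case (const c)
  show ?case using trig_poly_scale[OF g, of c] by (simp add: mult.commute)
next
  case (add h1 h2)
  show ?case using trig_poly.add[OF add.IH] by (simp add: distrib_left)
next
  case (mult_cis h k)
  show ?case using trig_poly.mult_cis[OF mult_cis.IH, of k] by (simp add: mult.assoc)
qed

lemma trig_poly_sum: "(\<And>i. i \<in> I \<Longrightarrow> trig_poly (h i)) \<Longrightarrow> trig_poly (\<lambda>t. \<Sum>i\<in>I. h i t)"
  by (induction I rule: infinite_finite_induct) (auto intro: trig_poly.intros)

lemma trig_poly_power: "trig_poly h \<Longrightarrow> trig_poly (\<lambda>t. h t ^ m)"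
  by (induction m) (auto intro: trig_poly.const trig_poly_mult)

lemma continuous_on_trig_poly: "trig_poly h \<Longrightarrow> continuous_on A h"
  by (induction rule: trig_poly.induct) (simp_all add: continuous_intros)

lemma trig_poly_cos_shift: "trig_poly (\<lambda>t. complex_of_real (cos (t - s)))"
proof -
  have "complex_of_real (cos (t - s))
      = cis (- s) / 2 * cis (of_int 1 * t) + cis s / 2 * cis (of_int (- 1) * t)" for t
    by (simp add: complex_eq_iff cos_diff sin_diff) argo
  moreover have "trig_poly (\<lambda>t. cis (- s) / 2 * cis (of_int 1 * t) + cis s / 2 * cis (of_int (- 1) * t))"
    by (intro trig_poly.add trig_poly.mult_cis trig_poly.const)
  ultimately show ?thesis by simp
qed

lemma trig_poly_Bernstein_cos:
  "trig_poly (\<lambda>t. complex_of_real (\<Sum>k\<le>N. c k * Bernstein N k ((1 + cos (t - s)) / 2)))"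
proof -
  define X where "X t = complex_of_real ((1 + cos (t - s)) / 2)" for t
  have "trig_poly (\<lambda>t. 1 / 2 * (1 + complex_of_real (cos (t - s))))"
    by (intro trig_poly_scale trig_poly.add trig_poly.const trig_poly_cos_shift)
  then have X: "trig_poly X"
    unfolding X_def by (simp add: field_simps)
  have "trig_poly (\<lambda>t. 1 + (- 1) * X t)"
    by (intro trig_poly.add trig_poly.const trig_poly_scale X)
  then have X': "trig_poly (\<lambda>t. 1 - X t)"
    by simp
  have "trig_poly (\<lambda>t. \<Sum>k\<le>N. complex_of_real (c k * real (N choose k)) * (X t ^ k * (1 - X t) ^ (N - k)))"
    by (intro trig_poly_sum trig_poly_scale trig_poly_mult trig_poly_power X X')
  then show ?thesis
    unfolding Bernstein_def X_def by (simp add: mult.assoc)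
qed

lemma abs_Bernstein_approx_le:
  fixes \<phi> :: "real \<Rightarrow> real"
  assumes M: "\<And>y. y \<in> {0..1} \<Longrightarrow> \<bar>\<phi> y\<bar> \<le> M" and x: "x \<in> {0..1}"
  shows "\<bar>\<Sum>k\<le>m. \<phi> (real k / real m) * Bernstein m k x\<bar> \<le> M"
proof -
  have "\<bar>\<Sum>k\<le>m. \<phi> (real k / real m) * Bernstein m k x\<bar>
      \<le> (\<Sum>k\<le>m. \<bar>\<phi> (real k / real m)\<bar> * Bernstein m k x)"
    by (rule order.trans[OF sum_abs]) (use x in \<open>auto simp: abs_mult Bernstein_nonneg intro!: sum_mono\<close>)
  also have "\<dots> \<le> (\<Sum>k\<le>m. M * Bernstein m k x)"
  proof (intro sum_mono mult_right_mono)
    fix k assume "k \<in> {..m}"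
    then have "real k / real m \<in> {0..1}"
      by (cases "m = 0") (auto simp: field_simps)
    then show "\<bar>\<phi> (real k / real m)\<bar> \<le> M"
      by (rule M)
  qed (use x in \<open>simp add: Bernstein_nonneg\<close>)
  also have "\<dots> = M"
    by (simp add: sum_distrib_left[symmetric])
  finally show ?thesis .
qed

lemma Bernstein_approx_tendsto:
  fixes \<phi> :: "real \<Rightarrow> real"
  assumes \<phi>: "continuous_on {0..1} \<phi>" and x: "x \<in> {0..1}"
  shows "(\<lambda>m. \<Sum>k\<le>m. \<phi> (real k / real m) * Bernstein m k x) \<longlonglongrightarrow> \<phi> x"
proof (rule LIMSEQ_I)
  fix e :: real assume "0 < e"
  then obtain N where N: "\<forall>m y. N \<le> m \<and> y \<in> {0..1} \<longrightarrow>
      \<bar>\<phi> y - (\<Sum>k\<le>m. \<phi> (real k / real m) * Bernstein m k y)\<bar> < e"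
    using Bernstein_Weierstrass[OF \<phi>] by blast
  show "\<exists>N. \<forall>m\<ge>N. norm ((\<Sum>k\<le>m. \<phi> (real k / real m) * Bernstein m k x) - \<phi> x) < e"
  proof (intro exI allI impI)
    fix m assume "N \<le> m"
    then have "\<bar>\<phi> x - (\<Sum>k\<le>m. \<phi> (real k / real m) * Bernstein m k x)\<bar> < e"
      using N x by blast
    then show "norm ((\<Sum>k\<le>m. \<phi> (real k / real m) * Bernstein m k x) - \<phi> x) < e"
      by (simp add: abs_minus_commute)
  qed
qed

lemma ramp_tendsto_indicator:
  fixes c y :: real
  shows "(\<lambda>m. min 1 (max 0 (real (Suc m) * (y - c)))) \<longlonglongrightarrow> indicator {c<..} y"
proof (cases "c < y")
  case True
  obtain M :: nat where M: "inverse (y - c) < real M"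
    using reals_Archimedean2 by blast
  have "min 1 (max 0 (real (Suc m) * (y - c))) = 1" if "M \<le> m" for m
  proof -
    have "1 < real M * (y - c)"
      using M True by (simp add: field_simps)
    also have "\<dots> \<le> real (Suc m) * (y - c)"
      using that True by (intro mult_right_mono) auto
    finally show ?thesis
      by simp
  qed
  then have "eventually (\<lambda>m. min 1 (max 0 (real (Suc m) * (y - c))) = 1) sequentially"
    by (auto simp: eventually_sequentially)
  then show ?thesis
    using True by (simp add: tendsto_eventually)
next
  case False
  then have "min 1 (max 0 (real (Suc m) * (y - c))) = 0" for m
    by (simp add: mult_nonneg_nonpos)
  then show ?thesis
    using False by simp
qed

locale vanishing_fourier_coeffs =
  fixes u :: "real \<Rightarrow> complex"
  assumes integrable_u: "integrable lborel u"
    and u_outside: "\<And>t. t \<notin> {-pi<..<pi} \<Longrightarrow> u t = 0"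
    and integral_u_cis: "\<And>k. (\<integral>t. u t * cis (of_int k * t) \<partial>lborel) = 0"
begin

lemma indicator_scaleR_u [simp]: "indicator {-pi..pi} t *\<^sub>R u t = u t"
  using u_outside[of t] by (auto simp: indicator_def)

lemma indicator_scaleR_u_mult [simp]: "indicator {-pi..pi} t *\<^sub>R (u t * z) = u t * z"
  using u_outside[of t] by (auto simp: indicator_def)

lemma integrable_mult_continuous:
  assumes "continuous_on {-pi..pi} h"
  shows "integrable lborel (\<lambda>t. u t * h t)"
proof -
  have "set_integrable lborel {-pi..pi} u"
    unfolding set_integrable_def using integrable_u by simp
  from set_integrable_mult_continuous[OF this assms]
  show ?thesis
    unfolding set_integrable_def by simp
qed

lemma integral_mult_trig_poly:
  assumes "trig_poly h"
  shows "(\<integral>t. u t * h t \<partial>lborel) = 0"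
proof -
  have "\<forall>k. (\<integral>t. u t * h t * cis (of_int k * t) \<partial>lborel) = 0"
    using assms
  proof (induction rule: trig_poly.induct)
    case (const c)
    have "(\<lambda>t. u t * c * cis (of_int k * t)) = (\<lambda>t. c * (u t * cis (of_int k * t)))" for k
      by (simp add: mult_ac)
    then show ?case
      by (simp add: integral_u_cis)
  next
    case (add g h)
    have "integrable lborel (\<lambda>t. u t * (f t * cis (of_int k * t)))" if "trig_poly f" for f k
      using that by (intro integrable_mult_continuous continuous_intros continuous_on_trig_poly)
    then show ?case
      using add by (simp add: distrib_left distrib_right mult.assoc)
  next
    case (mult_cis h k)
    show ?case
    proof
      fix m
      have "(\<lambda>t. u t * (h t * cis (of_int k * t)) * cis (of_int m * t))
          = (\<lambda>t. u t * h t * cis (of_int (k + m) * t))"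
        by (simp add: fun_eq_iff mult.assoc cis_mult distrib_right)
      then show "(\<integral>t. u t * (h t * cis (of_int k * t)) * cis (of_int m * t) \<partial>lborel) = 0"
        using mult_cis.IH[THEN spec, of "k + m"] by simp
    qed
  qed
  from this[THEN spec, of 0] show ?thesis
    by simp
qed

lemma integral_mult_eq_0_if_tendsto:
  fixes h :: "nat \<Rightarrow> real \<Rightarrow> complex"
  assumes h: "\<And>m. h m \<in> borel_measurable lborel"
    and zero: "\<And>m. (\<integral>t. u t * h m t \<partial>lborel) = 0"
    and bounded: "\<And>m t. norm (h m t) \<le> C"
    and lim: "\<And>t. (\<lambda>m. h m t) \<longlonglongrightarrow> l t"
  shows "(\<integral>t. u t * l t \<partial>lborel) = 0"
proof -
  have u: "u \<in> borel_measurable lborel"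
    using integrable_u by (rule borel_measurable_integrable)
  have "l \<in> borel_measurable lborel"
    using h lim by (rule borel_measurable_LIMSEQ_metric)
  have "(\<lambda>m. \<integral>t. u t * h m t \<partial>lborel) \<longlonglongrightarrow> (\<integral>t. u t * l t \<partial>lborel)"
  proof (rule integral_dominated_convergence[where w="\<lambda>t. C * norm (u t)"])
    show "(\<lambda>t. u t * l t) \<in> borel_measurable lborel"
      using u \<open>l \<in> borel_measurable lborel\<close> by (rule borel_measurable_times)
    show "(\<lambda>t. u t * h m t) \<in> borel_measurable lborel" for m
      using u h by (rule borel_measurable_times)
    show "integrable lborel (\<lambda>t. C * norm (u t))"
      using integrable_u by simp
    show "AE t in lborel. (\<lambda>m. u t * h m t) \<longlonglongrightarrow> u t * l t"
      using lim by (intro AE_I2 tendsto_mult tendsto_const)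
    show "AE t in lborel. norm (u t * h m t) \<le> C * norm (u t)" for m
    proof (rule AE_I2)
      fix t
      have "norm (u t) * norm (h m t) \<le> norm (u t) * C"
        using bounded by (rule mult_left_mono) simp
      then show "norm (u t * h m t) \<le> C * norm (u t)"
        by (simp add: norm_mult mult.commute)
    qed
  qed
  then show ?thesis
    using zero by (simp add: LIMSEQ_const_iff)
qed

lemma integral_mult_continuous_cos:
  fixes \<phi> :: "real \<Rightarrow> real"
  assumes \<phi>: "continuous_on {0..1} \<phi>"
  shows "(\<integral>t. u t * complex_of_real (\<phi> ((1 + cos (t - s)) / 2)) \<partial>lborel) = 0"
proof -
  define X where "X t = (1 + cos (t - s)) / 2" for t
  have X: "X t \<in> {0..1}" for t
    using cos_ge_minus_one[of "t - s"] cos_le_one[of "t - s"] unfolding X_def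
    by (simp del: cos_ge_minus_one cos_le_one)
  define B where "B m x = (\<Sum>k\<le>m. \<phi> (real k / real m) * Bernstein m k x)" for m x
  obtain M where M: "\<And>x. x \<in> {0..1} \<Longrightarrow> \<bar>\<phi> x\<bar> \<le> M"
    using compact_imp_bounded[OF compact_continuous_image[OF \<phi> compact_Icc]]
    unfolding bounded_iff real_norm_def by blast
  show ?thesis
  proof (rule integral_mult_eq_0_if_tendsto[where h="\<lambda>m t. complex_of_real (B m (X t))"])
    fix m
    have poly: "trig_poly (\<lambda>t. complex_of_real (B m (X t)))"
      unfolding B_def X_def by (rule trig_poly_Bernstein_cos)
    show "(\<lambda>t. complex_of_real (B m (X t))) \<in> borel_measurable lborel"
      using borel_measurable_continuous_onI[OF continuous_on_trig_poly[OF poly]] by simp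
    show "(\<integral>t. u t * complex_of_real (B m (X t)) \<partial>lborel) = 0"
      using integral_mult_trig_poly[OF poly] .
  next
    show "norm (complex_of_real (B m (X t))) \<le> M" for m t
    proof -
      have "\<bar>B m (X t)\<bar> \<le> M"
        unfolding B_def by (rule abs_Bernstein_approx_le[OF M X])
      then show ?thesis
        by simp
    qed
    show "(\<lambda>m. complex_of_real (B m (X t))) \<longlonglongrightarrow> complex_of_real (\<phi> ((1 + cos (t - s)) / 2))" for t
      unfolding B_def using Bernstein_approx_tendsto[OF \<phi> X] unfolding X_def by (rule tendsto_of_real)
  qed
qed

lemma integral_mult_indicator_cos:
  "(\<integral>t. u t * complex_of_real (indicator {c<..} ((1 + cos (t - s)) / 2)) \<partial>lborel) = 0"
proof -
  define ramp where "ramp m y = min 1 (max 0 (real (Suc m) * (y - c)))" for m and y :: real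
  let ?X = "\<lambda>t. (1 + cos (t - s)) / 2"
  show ?thesis
  proof (rule integral_mult_eq_0_if_tendsto[where h="\<lambda>m t. complex_of_real (ramp m (?X t))"])
    fix m t
    show "(\<integral>t. u t * complex_of_real (ramp m (?X t)) \<partial>lborel) = 0"
      unfolding ramp_def by (intro integral_mult_continuous_cos continuous_intros)
    show "(\<lambda>t. complex_of_real (ramp m (?X t))) \<in> borel_measurable lborel"
      unfolding ramp_def by measurable
    show "norm (complex_of_real (ramp m (?X t))) \<le> 1"
      unfolding ramp_def by simp
    show "(\<lambda>m. complex_of_real (ramp m (?X t))) \<longlonglongrightarrow> complex_of_real (indicator {c<..} (?X t))"
      unfolding ramp_def by (rule tendsto_of_real[OF ramp_tendsto_indicator])
  qed
qed

lemma set_integral_subinterval_eq_0: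
  assumes "-pi \<le> a" "a < b" "b \<le> pi"
  shows "(LBINT t:{a<..<b}. u t) = 0"
proof -
  define s where "s = (a + b) / 2"
  define r where "r = (b - a) / 2"
  define c where "c = (1 + cos r) / 2"
  have ab: "a = s - r" "b = s + r"
    by (simp_all add: s_def r_def field_simps)
  (* Within one period, (s - r, s + r) is the superlevel set of cos (t - s) at level cos r. *)
  have "indicator {a<..<b} t *\<^sub>R u t = u t * complex_of_real (indicator {c<..} ((1 + cos (t - s)) / 2))" for t
  proof (cases "t \<in> {-pi<..<pi}")
    case True
    have "c < (1 + cos (t - s)) / 2 \<longleftrightarrow> cos r < cos (t - s)"
      unfolding c_def by (simp add: field_simps)
    also have "\<dots> \<longleftrightarrow> \<bar>t - s\<bar> < r"
      using True assms unfolding ab by (intro cos_less_cos_iff_abs_less) auto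
    also have "\<dots> \<longleftrightarrow> t \<in> {a<..<b}"
      unfolding ab by (auto simp: abs_less_iff)
    finally show ?thesis
      by (simp add: indicator_def)
  next
    case False
    then show ?thesis
      using u_outside by simp
  qed
  then show ?thesis
    unfolding set_lebesgue_integral_def by (simp add: integral_mult_indicator_cos)
qed

lemma set_integral_interval_eq_0: "(LBINT t:{a<..<b}. u t) = 0"
proof (cases "max a (-pi) < min b pi")
  case True
  have "(\<lambda>t. indicator {a<..<b} t *\<^sub>R u t) = (\<lambda>t. indicator {max a (-pi)<..<min b pi} t *\<^sub>R u t)"
    using u_outside by (auto simp: fun_eq_iff indicator_def)
  then have "(LBINT t:{a<..<b}. u t) = (LBINT t:{max a (-pi)<..<min b pi}. u t)"
    unfolding set_lebesgue_integral_def by simp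
  also have "\<dots> = 0"
    using True by (intro set_integral_subinterval_eq_0) auto
  finally show ?thesis .
next
  case False
  have "(\<lambda>t. indicator {a<..<b} t *\<^sub>R u t) = (\<lambda>t. 0)"
    using u_outside False by (auto simp: fun_eq_iff indicator_def)
  then show ?thesis
    unfolding set_lebesgue_integral_def by simp
qed

lemma AE_eq_0: "AE t in lborel. u t = 0"
  using integrable_u set_integral_interval_eq_0 by (rule AE_eq_0_if_interval_integrals_eq_0)

end

lemma fourier_coeff_cis:
  "fourier_coeff g k = complex_of_real (1 / (2 * pi)) * (LBINT t:{-pi..pi}. g t * cis (- (of_int k * t)))"
  unfolding fourier_coeff_def by (simp add: cis_conv_exp mult.assoc)

lemma AE_not_pi: "AE t in lborel. t \<noteq> pi \<and> t \<noteq> - pi"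
  using AE_lborel_singleton[of pi] AE_lborel_singleton[of "- pi"] by eventually_elim simp

theorem fourier_coeffs_eq_0_imp_AE_eq_0:
  fixes g :: "real \<Rightarrow> complex"
  assumes g: "set_integrable lborel {-pi..pi} g" and zero: "\<And>k. fourier_coeff g k = 0"
  shows "AE t in lborel. t \<in> {-pi..pi} \<longrightarrow> g t = 0"
proof -
  define u where "u t = indicator {-pi<..<pi} t *\<^sub>R g t" for t
  have "set_integrable lborel {-pi<..<pi} g"
    by (rule set_integrable_subset[OF g]) auto
  then have "integrable lborel u"
    unfolding u_def set_integrable_def .
  moreover have "(\<integral>t. u t * cis (of_int k * t) \<partial>lborel) = 0" for k
  proof -
    have gc: "set_integrable lborel {-pi..pi} (\<lambda>t. g t * cis (of_int k * t))"
      using g by (intro set_integrable_mult_continuous continuous_intros)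
    then have "set_integrable lborel {-pi<..<pi} (\<lambda>t. g t * cis (of_int k * t))"
      by (rule set_integrable_subset) auto
    moreover have "AE t in lborel. t \<in> {-pi..pi} \<longleftrightarrow> t \<in> {-pi<..<pi}"
      using AE_not_pi by eventually_elim auto
    ultimately have "(LBINT t:{-pi<..<pi}. g t * cis (of_int k * t)) = (LBINT t:{-pi..pi}. g t * cis (of_int k * t))"
      using gc by (intro set_integral_cong_set) (auto simp: set_integrable_def set_borel_measurable_def)
    also have "\<dots> = complex_of_real (2 * pi) * fourier_coeff g (- k)"
      by (simp add: fourier_coeff_cis)
    finally show ?thesis
      using zero unfolding u_def set_lebesgue_integral_def by simp
  qed
  ultimately interpret vanishing_fourier_coeffs u
    by unfold_locales (auto simp: u_def)
  show ?thesis
    using AE_eq_0 AE_not_pi by eventually_elim (auto simp: u_def)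
qed

lemma set_integrable_reflect_cnj:
  fixes g :: "real \<Rightarrow> complex"
  assumes "set_integrable lborel {-a..a} g"
  shows "set_integrable lborel {-a..a} (\<lambda>t. cnj (g (- t)))"
proof -
  have "integrable lborel (\<lambda>t. indicator {-a..a} (- t) *\<^sub>R g (- t))"
    using lborel_integrable_real_affine[OF assms[unfolded set_integrable_def], of "-1" 0] by simp
  moreover have "(\<lambda>t. indicator {-a..a} t *\<^sub>R cnj (g (- t))) = (\<lambda>t. cnj (indicator {-a..a} (- t) *\<^sub>R g (- t)))"
    by (auto simp: fun_eq_iff indicator_def)
  ultimately show ?thesis
    unfolding set_integrable_def by (simp only: complex_integrable_cnj)
qed

lemma fourier_coeff_reflect_cnj: "fourier_coeff (\<lambda>t. cnj (g (- t))) k = cnj (fourier_coeff g k)"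
proof -
  have S: "{t. - t \<in> {-pi..pi}} = {-pi..pi}"
    by auto
  have "(LBINT t:{-pi..pi}. cnj (g t) * cis (of_int k * t))
      = (LBINT t:{-pi..pi}. cnj (g (- t)) * cis (- (of_int k * t)))"
    using set_integral_reflect[of "{-pi..pi}" "\<lambda>t. cnj (g t) * cis (of_int k * t)"] unfolding S by simp
  moreover have "(LBINT t:{-pi..pi}. cnj (g t) * cis (of_int k * t))
      = cnj (LBINT t:{-pi..pi}. g t * cis (- (of_int k * t)))"
    unfolding set_lebesgue_integral_def by (simp add: Bochner_Integration.integral_cnj[symmetric] cis_cnj)
  ultimately show ?thesis
    by (simp add: fourier_coeff_cis)
qed

lemma fourier_coeff_diff:
  assumes g: "set_integrable lborel {-pi..pi} g" and h: "set_integrable lborel {-pi..pi} h"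
  shows "fourier_coeff (\<lambda>t. g t - h t) k = fourier_coeff g k - fourier_coeff h k"
proof -
  have "set_integrable lborel {-pi..pi} (\<lambda>t. f t * cis (- (of_int k * t)))"
    if "set_integrable lborel {-pi..pi} f" for f :: "real \<Rightarrow> complex"
    using that by (intro set_integrable_mult_continuous continuous_intros)
  from set_integral_diff(2)[OF this[OF g] this[OF h]] show ?thesis
    by (simp add: fourier_coeff_cis left_diff_distrib right_diff_distrib)
qed

lemma fourier_coeff_eq_0_if_AE:
  assumes "AE t in lborel. t \<in> {-pi..pi} \<longrightarrow> g t = 0"
  shows "fourier_coeff g k = 0"
proof -
  have "(LBINT t:{-pi..pi}. g t * cis (- (of_int k * t))) = 0"
    unfolding set_lebesgue_integral_def
    by (rule integral_eq_zero_AE) (use assms in \<open>auto elim!: eventually_mono simp: indicator_def\<close>)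
  then show ?thesis
    by (simp add: fourier_coeff_cis)
qed

theorem fourier_coeffs_real_iff:
  fixes g :: "real \<Rightarrow> complex"
  assumes g: "set_integrable lborel {-pi..pi} g"
  shows "(\<forall>k. fourier_coeff g k \<in> \<real>) \<longleftrightarrow> (AE t in lborel. t \<in> {-pi..pi} \<longrightarrow> g (- t) = cnj (g t))"
proof -
  define d where "d t = cnj (g (- t)) - g t" for t
  have d: "set_integrable lborel {-pi..pi} d"
    unfolding d_def using set_integrable_reflect_cnj[OF g] g by (rule set_integral_diff(1))
  have coeff_d: "fourier_coeff d k = cnj (fourier_coeff g k) - fourier_coeff g k" for k
    unfolding d_def using set_integrable_reflect_cnj[OF g] g
    by (simp add: fourier_coeff_diff fourier_coeff_reflect_cnj)
  have d_eq_0: "d t = 0 \<longleftrightarrow> g (- t) = cnj (g t)" for t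
    unfolding d_def by (metis complex_cnj_cnj eq_iff_diff_eq_0)
  show ?thesis
  proof
    assume "\<forall>k. fourier_coeff g k \<in> \<real>"
    then have "fourier_coeff d k = 0" for k
      by (simp add: coeff_d Reals_cnj_iff)
    then show "AE t in lborel. t \<in> {-pi..pi} \<longrightarrow> g (- t) = cnj (g t)"
      using fourier_coeffs_eq_0_imp_AE_eq_0[OF d] by (simp add: d_eq_0)
  next
    assume "AE t in lborel. t \<in> {-pi..pi} \<longrightarrow> g (- t) = cnj (g t)"
    then have "fourier_coeff d k = 0" for k
      by (intro fourier_coeff_eq_0_if_AE) (simp add: d_eq_0)
    then show "\<forall>k. fourier_coeff g k \<in> \<real>"
      by (simp add: coeff_d Reals_cnj_iff)
  qed
qed

section \<open>Toeplitz matrices as quadratic forms\<close>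

lemma set_integral_cis:
  "(LBINT t:{-pi..pi}. cis (of_int k * t)) = (if k = 0 then complex_of_real (2 * pi) else 0)"
proof (cases "k = 0")
  case True
  then show ?thesis
    using set_integral_const[of "{-pi..pi}" lborel "1 :: complex"] by (simp add: scaleR_conv_of_real)
next
  case False
  define F where "F t = cis (of_int k * t) / (\<i> * of_int k)" for t
  have "(cis \<circ> (\<lambda>t. of_int k * t) has_integral F pi - F (- pi)) {-pi..pi}"
  proof (rule fundamental_theorem_of_calculus)
    fix t :: real
    have "((\<lambda>z. exp (\<i> * of_int k * z) / (\<i> * of_int k)) has_field_derivative
        exp (\<i> * of_int k * of_real t)) (at (of_real t))"
      using False by (auto intro!: derivative_eq_intros)
    from has_vector_derivative_real_field[OF this]
    show "(F has_vector_derivative (cis \<circ> (\<lambda>t. of_int k * t)) t) (at t within {-pi..pi})"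
      unfolding F_def by (simp add: cis_conv_exp mult.assoc)
  qed simp
  moreover have "F pi = F (- pi)"
  proof -
    have "sin (of_int k * pi) = 0"
      by (simp add: sin_times_pi_eq_0)
    then have "cis (of_int k * pi) = cis (- (of_int k * pi))"
      by (simp add: complex_eq_iff)
    then show ?thesis
      by (simp add: F_def)
  qed
  moreover have "set_integrable lborel {-pi..pi} (\<lambda>t. cis (of_int k * t))"
    by (intro borel_integrable_atLeastAtMost' continuous_intros)
  ultimately show ?thesis
    using False set_borel_integral_eq_integral(2) by (force simp: o_def integral_unique)
qed

lemma fourier_coeff_1: "fourier_coeff (\<lambda>_. 1) k = (if k = 0 then 1 else 0)"
  using set_integral_cis[of "- k"] by (simp add: fourier_coeff_cis)

lemma toeplitz_carrier [simp]: "toeplitz n g \<in> carrier_mat n n"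
  by (simp add: toeplitz_def)

lemma dim_toeplitz [simp]: "dim_row (toeplitz n g) = n" "dim_col (toeplitz n g) = n"
  by (simp_all add: toeplitz_def)

lemma toeplitz_index [simp]:
  "i < n \<Longrightarrow> j < n \<Longrightarrow> toeplitz n g $$ (i, j) = fourier_coeff g (int i - int j)"
  by (simp add: toeplitz_def)

lemma toeplitz_mult_vec_carrier [simp]: "toeplitz n g *\<^sub>v x \<in> carrier_vec n"
  by (rule carrier_vecI) simp

lemma toeplitz_mult_vec_index:
  "x \<in> carrier_vec n \<Longrightarrow> i < n \<Longrightarrow> (toeplitz n g *\<^sub>v x) $ i = (\<Sum>j<n. fourier_coeff g (int i - int j) * x $ j)"
  by (simp add: mult_mat_vec_def scalar_prod_def atLeast0LessThan mult.commute)

lemma toeplitz_1: "toeplitz n (\<lambda>_. 1) = 1\<^sub>m n"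
  by (rule eq_matI) (auto simp: fourier_coeff_1)

lemma cscalar_prod_eq_sum:
  fixes v w :: "complex vec"
  shows "v \<bullet>c w = (\<Sum>i<dim_vec w. v $ i * cnj (w $ i))"
  unfolding scalar_prod_def by (simp add: atLeast0LessThan)

lemma cscalar_prod_self: "x \<bullet>c x = complex_of_real ((vnorm x)\<^sup>2)" for x :: "complex vec"
proof -
  have "(vnorm x)\<^sup>2 = (\<Sum>i<dim_vec x. (cmod (x $ i))\<^sup>2)"
    by (simp add: vnorm_def sum_nonneg)
  then show ?thesis
    by (simp add: cscalar_prod_eq_sum complex_norm_square del: of_real_power)
qed

lemma vnorm_nonneg: "0 \<le> vnorm x"
  by (simp add: vnorm_def sum_nonneg)

definition fourier_sum :: "complex vec \<Rightarrow> real \<Rightarrow> complex" where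
  "fourier_sum x t = (\<Sum>j<dim_vec x. x $ j * cis (real j * t))"

lemma continuous_on_fourier_sum: "continuous_on A (fourier_sum x)"
  unfolding fourier_sum_def by (intro continuous_intros)

lemma cscalar_prod_toeplitz:
  fixes g :: "real \<Rightarrow> complex"
  assumes g: "set_integrable lborel {-pi..pi} g" and x: "x \<in> carrier_vec n" and y: "y \<in> carrier_vec n"
  shows "(toeplitz n g *\<^sub>v x) \<bullet>c y
    = complex_of_real (1 / (2 * pi)) * (LBINT t:{-pi..pi}. g t * (fourier_sum x t * cnj (fourier_sum y t)))"
proof -
  define I where "I i j = (LBINT t:{-pi..pi}. g t * cis ((real j - real i) * t))" for i j :: nat
  have gc: "set_integrable lborel {-pi..pi} (\<lambda>t. g t * cis (c * t))" for c
    using g by (intro set_integrable_mult_continuous continuous_intros)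
  have coeff: "fourier_coeff g (int i - int j) = complex_of_real (1 / (2 * pi)) * I i j" for i j
    unfolding fourier_coeff_cis I_def by (simp add: left_diff_distrib)
  have "(toeplitz n g *\<^sub>v x) \<bullet>c y
      = (\<Sum>i<n. \<Sum>j<n. complex_of_real (1 / (2 * pi)) * (x $ j * cnj (y $ i) * I i j))"
    using x y by (auto simp: cscalar_prod_eq_sum toeplitz_mult_vec_index coeff
        sum_distrib_left sum_distrib_right mult_ac simp del: index_mult_mat_vec intro!: sum.cong)
  also have "\<dots> = complex_of_real (1 / (2 * pi))
      * (\<Sum>i<n. \<Sum>j<n. LBINT t:{-pi..pi}. x $ j * cnj (y $ i) * (g t * cis ((real j - real i) * t)))"
    by (simp add: I_def sum_distrib_left)
  also have "(\<Sum>i<n. \<Sum>j<n. LBINT t:{-pi..pi}. x $ j * cnj (y $ i) * (g t * cis ((real j - real i) * t)))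
      = (LBINT t:{-pi..pi}. \<Sum>i<n. \<Sum>j<n. x $ j * cnj (y $ i) * (g t * cis ((real j - real i) * t)))"
    using gc by (simp add: set_integral_sum set_integrable_sum)
  also have "(\<lambda>t. \<Sum>i<n. \<Sum>j<n. x $ j * cnj (y $ i) * (g t * cis ((real j - real i) * t)))
      = (\<lambda>t. g t * (fourier_sum x t * cnj (fourier_sum y t)))"
  proof
    fix t
    have "fourier_sum x t * cnj (fourier_sum y t)
        = (\<Sum>j<n. x $ j * cis (real j * t)) * (\<Sum>i<n. cnj (y $ i) * cis (- (real i * t)))"
      using x y by (simp add: fourier_sum_def cis_cnj)
    also have "\<dots> = (\<Sum>i<n. \<Sum>j<n. x $ j * cnj (y $ i) * cis ((real j - real i) * t))"
      by (subst sum_product, subst sum.swap) (simp add: cis_mult right_diff_distrib mult_ac)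
    finally show "(\<Sum>i<n. \<Sum>j<n. x $ j * cnj (y $ i) * (g t * cis ((real j - real i) * t)))
        = g t * (fourier_sum x t * cnj (fourier_sum y t))"
      by (simp add: sum_distrib_left mult_ac)
  qed
  finally show ?thesis .
qed

lemma vnorm_sq_eq_integral:
  assumes x: "x \<in> carrier_vec n"
  shows "(vnorm x)\<^sup>2 = (LBINT t:{-pi..pi}. (cmod (fourier_sum x t))\<^sup>2) / (2 * pi)"
proof -
  have one: "set_integrable lborel {-pi..pi} (\<lambda>_. 1 :: complex)"
    by (intro borel_integrable_atLeastAtMost' continuous_intros)
  have "complex_of_real ((vnorm x)\<^sup>2) = (toeplitz n (\<lambda>_. 1) *\<^sub>v x) \<bullet>c x"
    using x by (simp add: toeplitz_1 cscalar_prod_self)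
  also have "\<dots> = complex_of_real (1 / (2 * pi))
      * (LBINT t:{-pi..pi}. complex_of_real ((cmod (fourier_sum x t))\<^sup>2))"
    unfolding cscalar_prod_toeplitz[OF one x x] by (simp add: complex_norm_square del: of_real_power)
  finally show ?thesis
    unfolding set_integral_complex_of_real by (simp only: of_real_mult[symmetric] of_real_eq_iff) simp
qed

lemma le_0_if_le_divide_pos:
  fixes J c :: real
  assumes "\<And>r. 0 < r \<Longrightarrow> J \<le> c / r"
  shows "J \<le> 0"
proof (rule ccontr)
  assume "\<not> J \<le> 0"
  then have J: "0 < J"
    by simp
  have "J \<le> c / ((\<bar>c\<bar> + 1) / J)"
    using J by (intro assms) (simp add: add_nonneg_pos)
  also have "\<dots> = c * J / (\<bar>c\<bar> + 1)"
    by simp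
  also have "\<dots> < J"
    using J by (simp add: pos_divide_less_eq add_nonneg_pos)
  finally show False
    by simp
qed

lemma le_mult_if_AM_GM_bounds:
  fixes J a b :: real
  assumes "0 \<le> a" "0 \<le> b" and bound: "\<And>r. 0 < r \<Longrightarrow> J \<le> r * a\<^sup>2 + b\<^sup>2 / r"
  shows "J \<le> 2 * (a * b)"
proof -
  consider "a = 0" | "b = 0" | "0 < a" "0 < b"
    using assms(1,2) by fastforce
  then show ?thesis
  proof cases
    case 1
    then have "J \<le> 0"
      using bound by (intro le_0_if_le_divide_pos[of J "b\<^sup>2"]) simp
    with 1 show ?thesis
      by simp
  next
    case 2
    have "J \<le> a\<^sup>2 / r" if "0 < r" for r
      using bound[of "1 / r"] that 2 by simp
    then have "J \<le> 0"
      by (rule le_0_if_le_divide_pos)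
    with 2 show ?thesis
      by simp
  next
    case 3
    then show ?thesis
      using bound[of "b / a"] by (simp add: field_simps power2_eq_square)
  qed
qed

lemma set_integral_cmod_fourier_sum_mult_le:
  assumes x: "x \<in> carrier_vec n" and y: "y \<in> carrier_vec n"
  shows "(LBINT t:{-pi..pi}. cmod (fourier_sum x t) * cmod (fourier_sum y t)) \<le> 2 * pi * (vnorm x * vnorm y)"
proof -
  have int: "set_integrable lborel {-pi..pi} (\<lambda>t. (cmod (fourier_sum z t))\<^sup>2)" for z
    by (intro borel_integrable_atLeastAtMost' continuous_intros continuous_on_fourier_sum)
  have "(LBINT t:{-pi..pi}. cmod (fourier_sum x t) * cmod (fourier_sum y t)) / pi
      \<le> 2 * (vnorm x * vnorm y)"
  proof (rule le_mult_if_AM_GM_bounds[OF vnorm_nonneg vnorm_nonneg])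
    fix r :: real assume r: "0 < r"
    have "(LBINT t:{-pi..pi}. cmod (fourier_sum x t) * cmod (fourier_sum y t))
        \<le> (LBINT t:{-pi..pi}. (r * (cmod (fourier_sum x t))\<^sup>2 + (cmod (fourier_sum y t))\<^sup>2 / r) / 2)"
    proof (rule set_integral_mono)
      show "set_integrable lborel {-pi..pi} (\<lambda>t. cmod (fourier_sum x t) * cmod (fourier_sum y t))"
        by (intro borel_integrable_atLeastAtMost' continuous_intros continuous_on_fourier_sum)
      show "set_integrable lborel {-pi..pi} (\<lambda>t. (r * (cmod (fourier_sum x t))\<^sup>2 + (cmod (fourier_sum y t))\<^sup>2 / r) / 2)"
        using r by (intro borel_integrable_atLeastAtMost' continuous_intros continuous_on_fourier_sum) auto
      fix t
      have "0 \<le> (r * cmod (fourier_sum x t) - cmod (fourier_sum y t))\<^sup>2"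
        by simp
      then show "cmod (fourier_sum x t) * cmod (fourier_sum y t)
          \<le> (r * (cmod (fourier_sum x t))\<^sup>2 + (cmod (fourier_sum y t))\<^sup>2 / r) / 2"
        using r by (simp add: field_simps power2_eq_square)
    qed
    also have "\<dots> = pi * (r * (vnorm x)\<^sup>2 + (vnorm y)\<^sup>2 / r)"
      using int by (simp add: vnorm_sq_eq_integral[OF x] vnorm_sq_eq_integral[OF y] field_simps)
    finally show "(LBINT t:{-pi..pi}. cmod (fourier_sum x t) * cmod (fourier_sum y t)) / pi
        \<le> r * (vnorm x)\<^sup>2 + (vnorm y)\<^sup>2 / r"
      by (simp add: field_simps)
  qed
  then show ?thesis
    by (simp add: field_simps)
qed

definition ess_bounded :: "(real \<Rightarrow> complex) \<Rightarrow> real \<Rightarrow> bool" where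
  "ess_bounded g B \<longleftrightarrow>
     set_borel_measurable lborel {-pi..pi} g \<and> (AE t in lborel. t \<in> {-pi..pi} \<longrightarrow> cmod (g t) \<le> B)"

lemma ess_bounded_nonneg:
  assumes "ess_bounded g B"
  shows "0 \<le> B"
proof (rule ccontr)
  assume "\<not> 0 \<le> B"
  then have "AE t in lborel. t \<notin> {-pi..pi}"
    using assms unfolding ess_bounded_def by (auto elim!: eventually_mono intro: order.trans[OF norm_ge_zero])
  then have "emeasure lborel {-pi..pi} = 0"
    by (subst (asm) AE_iff_measurable[of "{-pi..pi}"]) auto
  then show False
    by simp
qed

lemma ess_bounded_set_integrable:
  assumes "ess_bounded g B"
  shows "set_integrable lborel {-pi..pi} g"
proof (rule set_integrable_bound[where f="\<lambda>_. complex_of_real B"])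
  show "set_integrable lborel {-pi..pi} (\<lambda>_. complex_of_real B)"
    by (intro borel_integrable_atLeastAtMost' continuous_intros)
  show "set_borel_measurable lborel {-pi..pi} g"
    using assms by (simp add: ess_bounded_def)
  show "AE t in lborel. t \<in> {-pi..pi} \<longrightarrow> norm (g t) \<le> norm (complex_of_real B)"
    using assms unfolding ess_bounded_def by (auto elim!: eventually_mono)
qed

lemma ess_bounded_normalize:
  assumes "set_borel_measurable lborel {-pi..pi} f"
  shows "ess_bounded (\<lambda>t. f t / complex_of_real (cmod (f t))) 1"
proof -
  define F where "F t = indicator {-pi..pi} t *\<^sub>R f t" for t
  have [measurable]: "F \<in> borel_measurable lborel"
    using assms by (simp add: F_def[abs_def] set_borel_measurable_def)
  have "(\<lambda>t. indicator {-pi..pi} t *\<^sub>R (f t / complex_of_real (cmod (f t))))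
      = (\<lambda>t. F t / complex_of_real (cmod (F t)))"
    by (auto simp: fun_eq_iff indicator_def F_def)
  then show ?thesis
    unfolding ess_bounded_def set_borel_measurable_def by (simp add: norm_divide)
qed

lemma cmod_cscalar_prod_toeplitz_le:
  assumes g: "ess_bounded g B" and x: "x \<in> carrier_vec n" and y: "y \<in> carrier_vec n"
  shows "cmod ((toeplitz n g *\<^sub>v x) \<bullet>c y) \<le> B * (vnorm x * vnorm y)"
proof -
  let ?P = "\<lambda>t. fourier_sum x t * cnj (fourier_sum y t)"
  let ?H = "\<lambda>t. cmod (fourier_sum x t) * cmod (fourier_sum y t)"
  have gP: "set_integrable lborel {-pi..pi} (\<lambda>t. g t * ?P t)"
    using ess_bounded_set_integrable[OF g]
    by (intro set_integrable_mult_continuous continuous_intros continuous_on_fourier_sum)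
  have H: "set_integrable lborel {-pi..pi} ?H"
    by (intro borel_integrable_atLeastAtMost' continuous_intros continuous_on_fourier_sum)
  have "cmod (LBINT t:{-pi..pi}. g t * ?P t) \<le> (LBINT t:{-pi..pi}. cmod (g t * ?P t))"
    by (rule set_integral_norm_bound[OF gP])
  also have "\<dots> \<le> (LBINT t:{-pi..pi}. B * ?H t)"
  proof (rule set_integral_mono_AE)
    show "set_integrable lborel {-pi..pi} (\<lambda>t. cmod (g t * ?P t))"
      using gP by (rule set_integrable_norm)
    show "set_integrable lborel {-pi..pi} (\<lambda>t. B * ?H t)"
      using H by simp
    show "AE t in lborel. t \<in> {-pi..pi} \<longrightarrow> cmod (g t * ?P t) \<le> B * ?H t"
      using g unfolding ess_bounded_def
      by (auto elim!: eventually_mono simp: norm_mult intro!: mult_right_mono)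
  qed
  also have "\<dots> \<le> B * (2 * pi * (vnorm x * vnorm y))"
    using set_integral_cmod_fourier_sum_mult_le[OF x y] ess_bounded_nonneg[OF g]
    by (simp add: mult_left_mono)
  finally have "cmod (LBINT t:{-pi..pi}. g t * ?P t) \<le> B * (2 * pi * (vnorm x * vnorm y))" .
  then have "1 / (2 * pi) * cmod (LBINT t:{-pi..pi}. g t * ?P t) \<le> B * (vnorm x * vnorm y)"
    by (simp add: field_simps)
  then show ?thesis
    unfolding cscalar_prod_toeplitz[OF ess_bounded_set_integrable[OF g] x y] norm_mult norm_of_real
    by simp
qed

lemma le_divide_if_mult_power2_le:
  fixes y c d :: real
  assumes "0 < d" "0 \<le> c" "d * y\<^sup>2 \<le> c * y"
  shows "y \<le> c / d"
proof (cases "y \<le> 0")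
  case True
  then show ?thesis
    using assms(1,2) by (meson divide_nonneg_pos order.trans)
next
  case False
  then have "d * y \<le> c"
    using assms(3) by (simp add: power2_eq_square mult_le_cancel_right mult.assoc)
  then show ?thesis
    using assms(1) by (simp add: pos_le_divide_eq mult.commute)
qed

lemma vnorm_toeplitz_mult_le:
  assumes g: "ess_bounded g B" and x: "x \<in> carrier_vec n"
  shows "vnorm (toeplitz n g *\<^sub>v x) \<le> B * vnorm x"
proof -
  have "1 * (vnorm (toeplitz n g *\<^sub>v x))\<^sup>2 \<le> B * vnorm x * vnorm (toeplitz n g *\<^sub>v x)"
    using cmod_cscalar_prod_toeplitz_le[OF g x toeplitz_mult_vec_carrier[of n g x]]
    by (simp add: cscalar_prod_self mult.assoc del: of_real_power)
  moreover have "0 \<le> B * vnorm x"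
    using ess_bounded_nonneg[OF g] vnorm_nonneg by simp
  ultimately show ?thesis
    using le_divide_if_mult_power2_le[of 1] by simp
qed

lemma toeplitz_real_coercive:
  fixes h :: "real \<Rightarrow> real"
  assumes h: "set_integrable lborel {-pi..pi} h" and lower: "\<And>t. t \<in> {-pi..pi} \<Longrightarrow> \<delta> \<le> h t"
    and x: "x \<in> carrier_vec n"
  shows "\<delta> * (vnorm x)\<^sup>2 \<le> Re ((toeplitz n (\<lambda>t. complex_of_real (h t)) *\<^sub>v x) \<bullet>c x)"
proof -
  let ?Q = "\<lambda>t. h t * (cmod (fourier_sum x t))\<^sup>2"
  have "set_integrable lborel {-pi..pi} (\<lambda>t. complex_of_real (h t))"
    using h unfolding set_integrable_def
    by (simp add: scaleR_conv_of_real of_real_mult[symmetric] complex_of_real_integrable_eq del: of_real_mult)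
  from cscalar_prod_toeplitz[OF this x x]
  have "(toeplitz n (\<lambda>t. complex_of_real (h t)) *\<^sub>v x) \<bullet>c x
      = complex_of_real (1 / (2 * pi)) * (LBINT t:{-pi..pi}. complex_of_real (?Q t))"
    by (simp add: complex_norm_square mult.assoc del: of_real_power)
  then have Re_eq: "Re ((toeplitz n (\<lambda>t. complex_of_real (h t)) *\<^sub>v x) \<bullet>c x) = (LBINT t:{-pi..pi}. ?Q t) / (2 * pi)"
    unfolding set_integral_complex_of_real by simp
  have "\<delta> * (LBINT t:{-pi..pi}. (cmod (fourier_sum x t))\<^sup>2) \<le> (LBINT t:{-pi..pi}. ?Q t)"
  proof -
    have "\<delta> * (LBINT t:{-pi..pi}. (cmod (fourier_sum x t))\<^sup>2) = (LBINT t:{-pi..pi}. \<delta> * (cmod (fourier_sum x t))\<^sup>2)"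
      by simp
    also have "\<dots> \<le> (LBINT t:{-pi..pi}. ?Q t)"
    proof (rule set_integral_mono)
      show "set_integrable lborel {-pi..pi} (\<lambda>t. \<delta> * (cmod (fourier_sum x t))\<^sup>2)"
        by (intro borel_integrable_atLeastAtMost' continuous_intros continuous_on_fourier_sum)
      show "set_integrable lborel {-pi..pi} ?Q"
        using h by (intro set_integrable_mult_continuous continuous_intros continuous_on_fourier_sum)
      show "\<delta> * (cmod (fourier_sum x t))\<^sup>2 \<le> ?Q t" if "t \<in> {-pi..pi}" for t
        using lower[OF that] by (intro mult_right_mono) auto
    qed
    finally show ?thesis .
  qed
  then show ?thesis
    unfolding Re_eq vnorm_sq_eq_integral[OF x] by (simp add: divide_right_mono)
qed

section \<open>Norms, inverses and eigenvalues\<close>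

lemma vnorm_eq_0_iff:
  assumes "x \<in> carrier_vec n"
  shows "vnorm x = 0 \<longleftrightarrow> x = 0\<^sub>v n"
proof -
  have "vnorm x = 0 \<longleftrightarrow> (\<forall>i<n. x $ i = 0)"
    using assms by (auto simp: vnorm_def sum_nonneg_eq_0_iff)
  then show ?thesis
    using assms by (auto simp: vec_eq_iff)
qed

lemma vnorm_L2_set: "vnorm x = L2_set (\<lambda>i. cmod (x $ i)) {..<dim_vec x}"
  unfolding vnorm_def L2_set_def ..

lemma cmod_cscalar_prod_le:
  fixes x y :: "complex vec"
  assumes "dim_vec x = dim_vec y"
  shows "cmod (x \<bullet>c y) \<le> vnorm x * vnorm y"
proof -
  have "cmod (x \<bullet>c y) \<le> (\<Sum>i<dim_vec y. \<bar>cmod (x $ i)\<bar> * \<bar>cmod (y $ i)\<bar>)"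
    unfolding cscalar_prod_eq_sum by (rule order.trans[OF norm_sum]) (simp add: norm_mult)
  also have "\<dots> \<le> L2_set (\<lambda>i. cmod (x $ i)) {..<dim_vec y} * L2_set (\<lambda>i. cmod (y $ i)) {..<dim_vec y}"
    by (rule L2_set_mult_ineq)
  finally show ?thesis
    using assms by (simp add: vnorm_L2_set)
qed

lemma vnorm_minus_le:
  assumes "dim_vec a = dim_vec b"
  shows "vnorm (a - b) \<le> vnorm a + vnorm b"
proof -
  have "vnorm (a - b) = L2_set (\<lambda>i. cmod (a $ i - b $ i)) {..<dim_vec b}"
    unfolding vnorm_L2_set using assms by (intro L2_set_cong) auto
  also have "\<dots> \<le> L2_set (\<lambda>i. cmod (a $ i) + cmod (b $ i)) {..<dim_vec b}"
    by (intro L2_set_mono norm_triangle_ineq4) auto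
  also have "\<dots> \<le> L2_set (\<lambda>i. cmod (a $ i)) {..<dim_vec b} + L2_set (\<lambda>i. cmod (b $ i)) {..<dim_vec b}"
    by (rule L2_set_triangle_ineq)
  finally show ?thesis
    using assms by (simp add: vnorm_L2_set)
qed

lemma vnorm_smult: "vnorm (c \<cdot>\<^sub>v x) = cmod c * vnorm x"
  by (simp add: vnorm_def norm_mult power_mult_distrib sum_distrib_left[symmetric] real_sqrt_mult)

lemma coercive_mat_det_ne_0:
  fixes A :: "complex mat"
  assumes A: "A \<in> carrier_mat n n" and \<delta>: "0 < \<delta>"
    and coercive: "\<And>x. x \<in> carrier_vec n \<Longrightarrow> \<delta> * (vnorm x)\<^sup>2 \<le> Re ((A *\<^sub>v x) \<bullet>c x)"
  shows "det A \<noteq> 0"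
proof
  assume "det A = 0"
  then obtain v where v: "v \<in> carrier_vec n" "v \<noteq> 0\<^sub>v n" "A *\<^sub>v v = 0\<^sub>v n"
    using det_0_iff_vec_prod_zero[OF A] by blast
  have "\<delta> * (vnorm v)\<^sup>2 \<le> 0"
    using coercive[OF v(1)] v by (simp add: cscalar_prod_eq_sum)
  then have "vnorm v = 0"
    using \<delta> by (simp add: mult_le_0_iff)
  then show False
    using v vnorm_eq_0_iff by blast
qed

lemma coercive_mat_inverse:
  fixes A :: "complex mat"
  assumes A: "A \<in> carrier_mat n n" and \<delta>: "0 < \<delta>"
    and coercive: "\<And>x. x \<in> carrier_vec n \<Longrightarrow> \<delta> * (vnorm x)\<^sup>2 \<le> Re ((A *\<^sub>v x) \<bullet>c x)"
  obtains B where "mat_inverse A = Some B" "B \<in> carrier_mat n n"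
    "\<And>w. w \<in> carrier_vec n \<Longrightarrow> vnorm (B *\<^sub>v w) \<le> vnorm w / \<delta>"
proof -
  have "det A \<noteq> 0"
    using A \<delta> coercive by (rule coercive_mat_det_ne_0)
  then have "A \<in> Units (ring_mat TYPE(complex) n undefined)"
    by (rule det_non_zero_imp_unit[OF A])
  then obtain B where B: "mat_inverse A = Some B"
    using mat_inverse(1)[OF A, of undefined] by (cases "mat_inverse A") auto
  have AB: "A * B = 1\<^sub>m n" and B_carrier: "B \<in> carrier_mat n n"
    using mat_inverse(2)[OF A B] by auto
  show thesis
  proof (rule that[OF B B_carrier])
    fix w :: "complex vec" assume w: "w \<in> carrier_vec n"
    define z where "z = B *\<^sub>v w"
    have z: "z \<in> carrier_vec n"
      unfolding z_def using B_carrier w by (rule mult_mat_vec_carrier)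
    have "A *\<^sub>v z = w"
      unfolding z_def using assoc_mult_mat_vec[OF A B_carrier w, symmetric] AB w by simp
    then have "\<delta> * (vnorm z)\<^sup>2 \<le> Re (w \<bullet>c z)"
      using coercive[OF z] by simp
    also have "\<dots> \<le> cmod (w \<bullet>c z)"
      by (rule complex_Re_le_cmod)
    also have "\<dots> \<le> vnorm w * vnorm z"
      using w z by (intro cmod_cscalar_prod_le) simp
    finally have "\<delta> * (vnorm z)\<^sup>2 \<le> vnorm w * vnorm z" .
    then show "vnorm (B *\<^sub>v w) \<le> vnorm w / \<delta>"
      unfolding z_def[symmetric] using \<delta> vnorm_nonneg[of w] by (intro le_divide_if_mult_power2_le)
  qed
qed

lemma toeplitz_cmod_inverse:
  fixes f :: "real \<Rightarrow> complex"
  assumes f: "set_integrable lborel {-pi..pi} f" and \<delta>: "0 < \<delta>"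
    and lower: "\<forall>t\<in>{-pi..pi}. \<delta> \<le> cmod (f t)"
  obtains M where "mat_inverse (toeplitz n (\<lambda>t. complex_of_real (cmod (f t)))) = Some M"
    "M \<in> carrier_mat n n" "\<And>w. w \<in> carrier_vec n \<Longrightarrow> vnorm (M *\<^sub>v w) \<le> vnorm w / \<delta>"
proof -
  have "set_integrable lborel {-pi..pi} (\<lambda>t. cmod (f t))"
    using f by (rule set_integrable_norm)
  then have "\<delta> * (vnorm x)\<^sup>2 \<le> Re ((toeplitz n (\<lambda>t. complex_of_real (cmod (f t))) *\<^sub>v x) \<bullet>c x)"
    if "x \<in> carrier_vec n" for x
    using lower that by (intro toeplitz_real_coercive) auto
  then show ?thesis
    using coercive_mat_inverse[OF toeplitz_carrier \<delta>] that by blast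
qed

lemma spec_norm_le:
  assumes "dim_col A = n" "0 \<le> C"
    and bound: "\<And>x. x \<in> carrier_vec n \<Longrightarrow> vnorm (A *\<^sub>v x) \<le> C * vnorm x"
  shows "0 \<le> spec_norm A" "spec_norm A \<le> C"
proof -
  let ?X = "{vnorm (A *\<^sub>v x) | x. x \<in> carrier_vec (dim_col A) \<and> vnorm x \<le> 1}"
  have ub: "r \<le> C" if "r \<in> ?X" for r
  proof -
    from that obtain x where x: "x \<in> carrier_vec n" "vnorm x \<le> 1" "r = vnorm (A *\<^sub>v x)"
      using assms(1) by auto
    have "r \<le> C * vnorm x"
      using bound[OF x(1)] x(3) by simp
    also have "\<dots> \<le> C"
      using x(2) assms(2) by (simp add: mult_left_le)
    finally show ?thesis .
  qed
  have "vnorm (0\<^sub>v n) = 0"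
    by (simp add: vnorm_def)
  then have zero: "vnorm (A *\<^sub>v 0\<^sub>v n) \<in> ?X"
    using assms(1) by (auto intro!: exI[of _ "0\<^sub>v n"])
  show "spec_norm A \<le> C"
    unfolding spec_norm_def using zero ub by (intro cSup_least) auto
  have "vnorm (A *\<^sub>v 0\<^sub>v n) \<le> spec_norm A"
    unfolding spec_norm_def using zero ub by (intro cSup_upper bdd_aboveI)
  then show "0 \<le> spec_norm A"
    using vnorm_nonneg order.trans by blast
qed

lemma exchange_carrier [simp]: "exchange n \<in> carrier_mat n n"
  by (simp add: exchange_def)

lemma dim_exchange [simp]: "dim_row (exchange n) = n" "dim_col (exchange n) = n"
  by (simp_all add: exchange_def)

lemma exchange_mult_vec_carrier [simp]: "exchange n *\<^sub>v v \<in> carrier_vec n"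
  by (rule carrier_vecI) simp

lemma exchange_mult_vec_index:
  assumes v: "v \<in> carrier_vec n" and i: "i < n"
  shows "(exchange n *\<^sub>v v) $ i = v $ (n - Suc i)"
proof -
  have "(exchange n *\<^sub>v v) $ i = (\<Sum>j<n. (if i + j + 1 = n then 1 else 0) * v $ j)"
    using v i by (simp add: exchange_def mult_mat_vec_def scalar_prod_def atLeast0LessThan)
  also have "\<dots> = (\<Sum>j<n. if j = n - Suc i then v $ j else 0)"
    using i by (intro sum.cong) auto
  also have "\<dots> = v $ (n - Suc i)"
    using i by simp
  finally show ?thesis .
qed

lemma vnorm_exchange_mult:
  assumes v: "v \<in> carrier_vec n"
  shows "vnorm (exchange n *\<^sub>v v) = vnorm v"
proof -
  have "(\<Sum>i<n. (cmod ((exchange n *\<^sub>v v) $ i))\<^sup>2) = (\<Sum>i<n. (cmod (v $ (n - Suc i)))\<^sup>2)"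
    using v by (simp add: exchange_mult_vec_index del: index_mult_mat_vec)
  also have "\<dots> = (\<Sum>i<n. (cmod (v $ i))\<^sup>2)"
    by (rule sum.nat_diff_reindex)
  finally show ?thesis
    using v by (simp add: vnorm_def del: index_mult_mat_vec)
qed

lemma exchange_mult_index:
  assumes A: "A \<in> carrier_mat n m" and i: "i < n" and j: "j < m"
  shows "(exchange n * A) $$ (i, j) = A $$ (n - Suc i, j)"
proof -
  have "(exchange n * A) $$ (i, j) = (\<Sum>k<n. (if i + k + 1 = n then 1 else 0) * A $$ (k, j))"
    using A i j by (simp add: exchange_def scalar_prod_def atLeast0LessThan)
  also have "\<dots> = (\<Sum>k<n. if k = n - Suc i then A $$ (k, j) else 0)"
    using i by (intro sum.cong) auto
  also have "\<dots> = A $$ (n - Suc i, j)"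
    using i by simp
  finally show ?thesis .
qed

lemma eigenvalue_cmod_le:
  fixes A :: "complex mat"
  assumes A: "A \<in> carrier_mat n n"
    and bound: "\<And>x. x \<in> carrier_vec n \<Longrightarrow> vnorm (A *\<^sub>v x) \<le> C * vnorm x"
    and ev: "eigenvalue A e"
  shows "cmod e \<le> C"
proof -
  obtain v where v: "v \<in> carrier_vec n" "v \<noteq> 0\<^sub>v n" "A *\<^sub>v v = e \<cdot>\<^sub>v v"
    using ev A unfolding eigenvalue_def eigenvector_def by auto
  have "0 < vnorm v"
    using v vnorm_eq_0_iff[OF v(1)] vnorm_nonneg[of v] by linarith
  moreover have "cmod e * vnorm v \<le> C * vnorm v"
    using bound[OF v(1)] v(3) by (simp add: vnorm_smult)
  ultimately show ?thesis
    by simp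
qed

lemma eigenvalue_real_if_hermitian:
  fixes A :: "complex mat"
  assumes A: "A \<in> carrier_mat n n"
    and hermitian: "\<And>i j. i < n \<Longrightarrow> j < n \<Longrightarrow> A $$ (j, i) = cnj (A $$ (i, j))"
    and ev: "eigenvalue A e"
  shows "e \<in> \<real>"
proof -
  obtain v where v: "v \<in> carrier_vec n" "v \<noteq> 0\<^sub>v n" "A *\<^sub>v v = e \<cdot>\<^sub>v v"
    using ev A unfolding eigenvalue_def eigenvector_def by auto
  define q where "q = (\<Sum>i<n. \<Sum>j<n. A $$ (i, j) * v $ j * cnj (v $ i))"
  have "q = (A *\<^sub>v v) \<bullet>c v"
    using A v(1) by (simp add: q_def cscalar_prod_eq_sum scalar_prod_def atLeast0LessThan sum_distrib_right)
  also have "\<dots> = e * (v \<bullet>c v)"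
    using v by (simp add: cscalar_prod_eq_sum sum_distrib_left mult.assoc)
  also have "\<dots> = e * complex_of_real ((vnorm v)\<^sup>2)"
    by (simp add: cscalar_prod_self)
  finally have q_eq: "q = e * complex_of_real ((vnorm v)\<^sup>2)" .
  have "cnj q = (\<Sum>i<n. \<Sum>j<n. A $$ (j, i) * v $ i * cnj (v $ j))"
    by (simp add: q_def hermitian[symmetric] mult_ac)
  also have "\<dots> = q"
    unfolding q_def by (subst sum.swap) (simp add: mult_ac)
  finally have "q \<in> \<real>"
    using Reals_cnj_iff by blast
  moreover have "vnorm v \<noteq> 0"
    using v vnorm_eq_0_iff by blast
  ultimately have "e = q / complex_of_real ((vnorm v)\<^sup>2)"
    using q_eq by simp
  then show ?thesis
    using \<open>q \<in> \<real>\<close> by simp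
qed

lemma eigenvalue_exchange_toeplitz:
  assumes g: "ess_bounded g B" and real: "\<forall>k. fourier_coeff g k \<in> \<real>"
    and ev: "eigenvalue (exchange n * toeplitz n g) e"
  shows "e \<in> \<real> \<and> cmod e \<le> B"
proof
  have YA: "exchange n * toeplitz n g \<in> carrier_mat n n"
    using exchange_carrier toeplitz_carrier by (rule mult_carrier_mat)
  have "(exchange n * toeplitz n g) $$ (j, i) = cnj ((exchange n * toeplitz n g) $$ (i, j))"
    if "i < n" "j < n" for i j
    using that real
    by (simp add: exchange_mult_index[OF toeplitz_carrier] Reals_cnj_iff algebra_simps del: index_mult_mat)
  then show "e \<in> \<real>"
    by (rule eigenvalue_real_if_hermitian[OF YA _ ev])
  have "vnorm ((exchange n * toeplitz n g) *\<^sub>v x) \<le> B * vnorm x" if "x \<in> carrier_vec n" for x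
    using that vnorm_toeplitz_mult_le[OF g that]
    by (simp add: assoc_mult_mat_vec[of _ n n _ n] vnorm_exchange_mult)
  then show "cmod e \<le> B"
    by (rule eigenvalue_cmod_le[OF YA _ ev])
qed

lemma spec_norm_toeplitz_error_le:
  fixes f :: "real \<Rightarrow> complex"
  assumes f: "ess_bounded f B" and \<delta>: "0 < \<delta>" and lower: "\<forall>t\<in>{-pi..pi}. \<delta> \<le> cmod (f t)"
  shows "\<bar>spec_norm (the (mat_inverse (toeplitz n (\<lambda>t. complex_of_real (cmod (f t)))))
               * exchange n * toeplitz n f
             - exchange n * toeplitz n (\<lambda>t. f t / complex_of_real (cmod (f t))))\<bar> \<le> B / \<delta> + 1"
proof -
  let ?M = "toeplitz n (\<lambda>t. complex_of_real (cmod (f t)))"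
  let ?Y = "exchange n" and ?A = "toeplitz n f"
  let ?T = "toeplitz n (\<lambda>t. f t / complex_of_real (cmod (f t)))"
  obtain Minv where Minv: "mat_inverse ?M = Some Minv" "Minv \<in> carrier_mat n n"
      and Minv_bound: "\<And>w. w \<in> carrier_vec n \<Longrightarrow> vnorm (Minv *\<^sub>v w) \<le> vnorm w / \<delta>"
    using toeplitz_cmod_inverse[OF ess_bounded_set_integrable[OF f] \<delta> lower] by blast
  have f': "ess_bounded (\<lambda>t. f t / complex_of_real (cmod (f t))) 1"
    using f by (intro ess_bounded_normalize) (simp add: ess_bounded_def)
  have B: "0 \<le> B"
    by (rule ess_bounded_nonneg[OF f])
  let ?E = "Minv * ?Y * ?A - ?Y * ?T"
  have "vnorm (?E *\<^sub>v x) \<le> (B / \<delta> + 1) * vnorm x" if x: "x \<in> carrier_vec n" for x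
  proof -
    have MYA: "Minv * ?Y * ?A \<in> carrier_mat n n" and YT: "?Y * ?T \<in> carrier_mat n n"
      using Minv(2) by (auto intro!: mult_carrier_mat)
    have "?E *\<^sub>v x = (Minv * ?Y * ?A) *\<^sub>v x - (?Y * ?T) *\<^sub>v x"
      by (rule minus_mult_distrib_mat_vec[OF MYA YT x])
    also have "\<dots> = Minv *\<^sub>v (?Y *\<^sub>v (?A *\<^sub>v x)) - ?Y *\<^sub>v (?T *\<^sub>v x)"
      using Minv(2) x by (simp add: assoc_mult_mat_vec[of _ n n _ n])
    finally have "vnorm (?E *\<^sub>v x) = vnorm (Minv *\<^sub>v (?Y *\<^sub>v (?A *\<^sub>v x)) - ?Y *\<^sub>v (?T *\<^sub>v x))"
      by simp
    also have "\<dots> \<le> vnorm (Minv *\<^sub>v (?Y *\<^sub>v (?A *\<^sub>v x))) + vnorm (?Y *\<^sub>v (?T *\<^sub>v x))"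
      using Minv(2) by (intro vnorm_minus_le) simp
    also have "\<dots> \<le> vnorm (?A *\<^sub>v x) / \<delta> + vnorm (?T *\<^sub>v x)"
      using Minv_bound[of "?Y *\<^sub>v (?A *\<^sub>v x)"] by (simp add: vnorm_exchange_mult)
    also have "\<dots> \<le> B * vnorm x / \<delta> + 1 * vnorm x"
      using vnorm_toeplitz_mult_le[OF f x] vnorm_toeplitz_mult_le[OF f' x] \<delta>
      by (intro add_mono divide_right_mono) auto
    finally show ?thesis
      by (simp add: field_simps)
  qed
  moreover have "dim_col ?E = n"
    by simp
  ultimately have "0 \<le> spec_norm ?E" "spec_norm ?E \<le> B / \<delta> + 1"
    using spec_norm_le[of ?E n "B / \<delta> + 1"] B \<delta> by auto
  then show ?thesis
    using Minv(1) by simp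
qed

lemma bounded_imp_smallo_real:
  fixes s :: "nat \<Rightarrow> real"
  assumes "\<And>n. \<bar>s n\<bar> \<le> C"
  shows "s \<in> o(\<lambda>n. real n)"
proof (rule landau_o.big_small_trans)
  show "s \<in> O(\<lambda>_. 1)"
    using assms by (intro bigoI[of _ C]) auto
  show "(\<lambda>_. 1) \<in> o(\<lambda>n. real n)"
    by real_asymp
qed

theorem theorem3p5:
  fixes f :: "real \<Rightarrow> complex" and \<delta> :: real
  assumes meas: "set_borel_measurable lborel {-pi..pi} f"
    and ess_bdd: "\<exists>B. AE t in lborel. t \<in> {-pi..pi} \<longrightarrow> cmod (f t) \<le> B"
    and real_coeffs: "\<forall>k. fourier_coeff f k \<in> \<real>"
    and delta_pos: "\<delta> > 0"
    and lower: "\<forall>t\<in>{-pi..pi}. \<delta> \<le> cmod (f t)"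
  shows "(\<lambda>n. spec_norm
            (the (mat_inverse (toeplitz n (\<lambda>t. complex_of_real (cmod (f t)))))
               * exchange n * toeplitz n f
             - exchange n * toeplitz n (\<lambda>t. f t / complex_of_real (cmod (f t)))))
           \<in> o(\<lambda>n. real n)
       \<and> (\<forall>n ev. eigenvalue (exchange n * toeplitz n (\<lambda>t. f t / complex_of_real (cmod (f t)))) ev
            \<longrightarrow> ev \<in> \<real> \<and> -1 \<le> Re ev \<and> Re ev \<le> 1)"
proof -
  obtain B where f: "ess_bounded f B"
    using meas ess_bdd unfolding ess_bounded_def by blast
  let ?f' = "\<lambda>t. f t / complex_of_real (cmod (f t))"
  have f': "ess_bounded ?f' 1"
    using meas by (rule ess_bounded_normalize)
  have "AE t in lborel. t \<in> {-pi..pi} \<longrightarrow> f (- t) = cnj (f t)"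
    using real_coeffs fourier_coeffs_real_iff[OF ess_bounded_set_integrable[OF f]] by blast
  then have "AE t in lborel. t \<in> {-pi..pi} \<longrightarrow> ?f' (- t) = cnj (?f' t)"
    by eventually_elim simp
  then have real': "\<forall>k. fourier_coeff ?f' k \<in> \<real>"
    using fourier_coeffs_real_iff[OF ess_bounded_set_integrable[OF f']] by blast
  have eigenvalues: "\<forall>n ev. eigenvalue (exchange n * toeplitz n ?f') ev \<longrightarrow> ev \<in> \<real> \<and> -1 \<le> Re ev \<and> Re ev \<le> 1"
  proof (intro allI impI)
    fix n ev assume "eigenvalue (exchange n * toeplitz n ?f') ev"
    then have "ev \<in> \<real>" "cmod ev \<le> 1"
      using eigenvalue_exchange_toeplitz[OF f' real'] by auto
    moreover have "\<bar>Re ev\<bar> \<le> cmod ev"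
      by (rule abs_Re_le_cmod)
    ultimately show "ev \<in> \<real> \<and> -1 \<le> Re ev \<and> Re ev \<le> 1"
      by (auto simp: abs_le_iff)
  qed
  show ?thesis
    by (rule conjI[OF bounded_imp_smallo_real[OF spec_norm_toeplitz_error_le[OF f delta_pos lower]]
          eigenvalues])
qed

end
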